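(* There exists an instance $(x,b)$ (for example $x=(\frac14,\frac34,\frac34)$, $b=(2,1,1)$) such that both the optimal \textsc{Set Once Strip Cover} lifetime and the optimal \textsc{Strip Cover} lifetime of $(x,b)$ are at least $\frac{3}{2}$ times the lifetime of every duty cycle schedule for $(x,b)$. Consequently, the approximation ratio of any duty cycle algorithm is at least $\frac32$ for both \textsc{Set Once Strip Cover} and \textsc{Strip Cover}.
   Context: Instances: $(x,b)$ with sensor locations $x=(x_1,\ldots,x_n)\in[0,1]^n$ and battery charges $b_i\ge0$. A sensor $i$ assigned radius $\rho_i>0$ covers $[x_i-\rho_i,x_i+\rho_i]$ and its battery lasts $b_i/\rho_i$ time units while active. In \textsc{Set Once Strip Cover}, each sensor gets a radius $\rho_i\in[0,1]$ and an activation time $\tau_i\ge0$, set once, and covers $[x_i-\rho_i,x_i+\rho_i]$ during $[\tau_i,\tau_i+b_i/\rho_i]$; the lifetime is the maximum $T$ such that every point of $[0,1]\times[0,T]$ is covered by some active sensor. In \textsc{Strip Cover}, each sensor's radius is a piecewise constant function $\rho_i(t)\ge0$ with finitely many pieces and $\int_0^\infty\rho_i(t)\,dt\le b_i$; the lifetime is the maximum $T$ with $[0,1]\subseteq\bigcup_i[x_i-\rho_i(t),x_i+\rho_i(t)]$ for all $t\in[0,T]$. A duty cycle schedule partitions the sensors into shifts $S_1,\ldots,S_m$ which work one after another, each shift by itself: the sensors of a shift are activated simultaneously when the shift starts, with radii fixed for the shift, and the shift lasts as long as its sensors alone cover $[0,1]$; thus the duration of shift $S$ is the optimal \textsc{Set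 Radius Strip Cover} lifetime $L(S)$ of the sub-instance consisting of the sensors in $S$ (the maximum $T$ such that for some radii $\rho$ on $S$, for all $t\in[0,T]$, $[0,1]\subseteq\bigcup_{i\in S:\rho_i>0,\,b_i/\rho_i\ge t}[x_i-\rho_i,x_i+\rho_i]$), and the lifetime of the duty cycle schedule is $\sum_{j}L(S_j)$. \textsc{RoundRobin} is the duty cycle algorithm with singleton shifts. *)

theory Defs
  imports "HOL-Analysis.Analysis" "HOL-Library.Disjoint_Sets"
begin

text \<open>An instance consists of n sensors indexed by 0..n-1, with locations x i and
  battery charges b i.\<close>

text \<open>Sensor i with radius rho i > 0 and activation time tau i covers
  [x i - rho i, x i + rho i] during [tau i, tau i + b i / rho i].
  A sensor with radius 0 is inactive.\<close>

definition so_covers ::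
  "nat \<Rightarrow> (nat \<Rightarrow> real) \<Rightarrow> (nat \<Rightarrow> real) \<Rightarrow> (nat \<Rightarrow> real) \<Rightarrow> (nat \<Rightarrow> real) \<Rightarrow> real \<Rightarrow> bool"
where
  "so_covers n x b rho tau T \<longleftrightarrow>
     (\<forall>t\<in>{0..T}. \<forall>p\<in>{0..1}. \<exists>i<n. 0 < rho i \<and> \<bar>p - x i\<bar> \<le> rho i
        \<and> tau i \<le> t \<and> t \<le> tau i + b i / rho i)"

definition so_lifetime ::
  "nat \<Rightarrow> (nat \<Rightarrow> real) \<Rightarrow> (nat \<Rightarrow> real) \<Rightarrow> (nat \<Rightarrow> real) \<Rightarrow> (nat \<Rightarrow> real) \<Rightarrow> real"
where
  "so_lifetime n x b rho tau = Sup (insert 0 {T. 0 \<le> T \<and> so_covers n x b rho tau T})"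

definition so_feasible :: "nat \<Rightarrow> (nat \<Rightarrow> real) \<Rightarrow> (nat \<Rightarrow> real) \<Rightarrow> bool" where
  "so_feasible n rho tau \<longleftrightarrow> (\<forall>i<n. 0 \<le> rho i \<and> rho i \<le> 1 \<and> 0 \<le> tau i)"

definition opt_set_once :: "nat \<Rightarrow> (nat \<Rightarrow> real) \<Rightarrow> (nat \<Rightarrow> real) \<Rightarrow> real" where
  "opt_set_once n x b = Sup {so_lifetime n x b rho tau | rho tau. so_feasible n rho tau}"

text \<open>Piecewise constant function on [0,\<infinity>) with finitely many pieces: there is a finite
  set B of breakpoints such that f is constant on every interval [s,t] \<subseteq> [0,\<infinity>) whose
  half-open part (s,t] contains no breakpoint (pieces are of the form [t_j, t_{j+1})).\<close>

definition piecewise_const :: "(real \<Rightarrow> real) \<Rightarrow> bool" where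
  "piecewise_const f \<longleftrightarrow> (\<exists>B. finite B \<and>
     (\<forall>s t. 0 \<le> s \<and> s \<le> t \<and> (\<forall>u\<in>B. \<not> (s < u \<and> u \<le> t)) \<longrightarrow> f s = f t))"

definition sc_feasible :: "nat \<Rightarrow> (nat \<Rightarrow> real) \<Rightarrow> (nat \<Rightarrow> real \<Rightarrow> real) \<Rightarrow> bool" where
  "sc_feasible n b rho \<longleftrightarrow> (\<forall>i<n. piecewise_const (rho i) \<and> (\<forall>t\<ge>0. 0 \<le> rho i t)
      \<and> (\<exists>I. (rho i has_integral I) {0..} \<and> I \<le> b i))"

definition sc_covers :: "nat \<Rightarrow> (nat \<Rightarrow> real) \<Rightarrow> (nat \<Rightarrow> real \<Rightarrow> real) \<Rightarrow> real \<Rightarrow> bool" where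
  "sc_covers n x rho T \<longleftrightarrow>
     (\<forall>t\<in>{0..T}. \<forall>p\<in>{0..1}. \<exists>i<n. \<bar>p - x i\<bar> \<le> rho i t)"

definition sc_lifetime :: "nat \<Rightarrow> (nat \<Rightarrow> real) \<Rightarrow> (nat \<Rightarrow> real \<Rightarrow> real) \<Rightarrow> real" where
  "sc_lifetime n x rho = Sup (insert 0 {T. 0 \<le> T \<and> sc_covers n x rho T})"

definition opt_strip_cover :: "nat \<Rightarrow> (nat \<Rightarrow> real) \<Rightarrow> (nat \<Rightarrow> real) \<Rightarrow> real" where
  "opt_strip_cover n x b = Sup {sc_lifetime n x rho | rho. sc_feasible n b rho}"

definition sr_covers :: "nat set \<Rightarrow> (nat \<Rightarrow> real) \<Rightarrow> (nat \<Rightarrow> real) \<Rightarrow> (nat \<Rightarrow> real) \<Rightarrow> real \<Rightarrow> bool" where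
  "sr_covers S x b rho T \<longleftrightarrow>
     (\<forall>t\<in>{0..T}. \<forall>p\<in>{0..1}. \<exists>i\<in>S. 0 < rho i \<and> t \<le> b i / rho i \<and> \<bar>p - x i\<bar> \<le> rho i)"

definition shift_lifetime :: "nat set \<Rightarrow> (nat \<Rightarrow> real) \<Rightarrow> (nat \<Rightarrow> real) \<Rightarrow> real" where
  "shift_lifetime S x b = Sup (insert 0 {T. 0 \<le> T \<and>
      (\<exists>rho. (\<forall>i\<in>S. 0 \<le> rho i) \<and> sr_covers S x b rho T)})"

text \<open>A duty cycle schedule is a partition P of the sensors {0..<n} into shifts;
  its lifetime is the sum of the shift lifetimes.\<close>
definition duty_cycle_lifetime :: "nat set set \<Rightarrow> (nat \<Rightarrow> real) \<Rightarrow> (nat \<Rightarrow> real) \<Rightarrow> real" where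
  "duty_cycle_lifetime P x b = (\<Sum>S\<in>P. shift_lifetime S x b)"

definition ex_x :: "nat \<Rightarrow> real" where
  "ex_x i = [1/4, 3/4, 3/4] ! i"

definition ex_b :: "nat \<Rightarrow> real" where
  "ex_b i = [2, 1, 1] ! i"

end

theory Submission imports Defs begin

text \<open>Put sensor 0 at 1/4 with charge 2 and sensors 1, 2 at 3/4 with charge 1. Without the
  duty cycle restriction, sensor 0 covers [0, 1/2] with radius 1/4 for 8 time units while
  sensors 1 and 2 cover [1/2, 1] one after the other, 4 units each, so both Strip Cover
  problems reach lifetime 8. A single shift, however, has to cover both endpoints 0 and 1
  for its whole duration, and covering a point at distance d consumes charge at rate at
  least d. This gives L(S) \<le> \<Sum>i\<in>S. w i with w = (8/3, 4/3, 4/3), so every duty cycle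
  schedule lives at most 16/3 = 2/3 \<cdot> 8.\<close>

lemma interval_le_card_mul_of_cover:
  fixes c :: "nat \<Rightarrow> real"
  assumes "0 \<le> T" "0 \<le> L" "{0..T} \<subseteq> (\<Union>i<n. {c i .. c i + L})"
  shows "T \<le> real n * L"
proof -
  have "ennreal T = emeasure lborel {0..T}" using assms by simp
  also have "\<dots> \<le> emeasure lborel (\<Union>i<n. {c i .. c i + L})"
    by (rule emeasure_mono[OF assms(3)]) auto
  also have "\<dots> \<le> (\<Sum>i<n. emeasure lborel {c i .. c i + L})"
    by (rule emeasure_subadditive_finite) auto
  also have "\<dots> = ennreal (real n * L)"
    using assms by (simp add: ennreal_mult ennreal_of_nat_eq_real_of_nat)
  finally show ?thesis using assms by (auto simp add: ennreal_le_iff2)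
qed

text \<open>A point p at distance at least d from every sensor can only be covered by sensors
  of radius at least d, which stay active for at most B / d time units.\<close>
lemma so_covers_le:
  assumes cov: "so_covers n x b rho tau T" and "0 \<le> T"
    and p: "p \<in> {0..1}" and d: "0 < d" "\<And>i. i < n \<Longrightarrow> d \<le> \<bar>p - x i\<bar>"
    and B: "0 \<le> B" "\<And>i. i < n \<Longrightarrow> 0 \<le> b i \<and> b i \<le> B"
  shows "T \<le> real n * (B / d)"
proof (rule interval_le_card_mul_of_cover)
  show "{0..T} \<subseteq> (\<Union>i<n. {tau i .. tau i + B / d})"
  proof
    fix t assume "t \<in> {0..T}"
    then obtain i where i: "i < n" "0 < rho i" "\<bar>p - x i\<bar> \<le> rho i" "tau i \<le> t"
      "t \<le> tau i + b i / rho i"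
      using cov p unfolding so_covers_def by blast
    have "b i / rho i \<le> B / d"
      using B(2)[OF i(1)] d(1) d(2)[OF i(1)] i(3) by (intro frac_le) auto
    then show "t \<in> (\<Union>i<n. {tau i .. tau i + B / d})" using i by auto
  qed
qed (use assms in auto)

text \<open>Integrating the covering condition at a point p over [0, T]: some radius is at
  least d at every moment, so the total charge is at least T d.\<close>
lemma sc_covers_le:
  assumes feas: "sc_feasible n b rho" and cov: "sc_covers n x rho T" and T: "0 \<le> T"
    and p: "p \<in> {0..1}" and d: "\<And>i. i < n \<Longrightarrow> d \<le> \<bar>p - x i\<bar>"
  shows "T * d \<le> (\<Sum>i<n. b i)"
proof -
  obtain I where I: "\<And>i. i < n \<Longrightarrow> (rho i has_integral I i) {0..} \<and> I i \<le> b i"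
    using feas unfolding sc_feasible_def by metis
  have nonneg: "\<And>i t. i < n \<Longrightarrow> 0 \<le> t \<Longrightarrow> 0 \<le> rho i t"
    using feas unfolding sc_feasible_def by blast
  have total: "((\<lambda>t. \<Sum>i<n. rho i t) has_integral (\<Sum>i<n. I i)) {0..}"
    by (rule has_integral_sum) (use I in auto)
  have "((\<lambda>t. if t \<in> {0..T} then d else 0) has_integral (T * d)) {0..}"
    using has_integral_const_real[of d 0 T] T by (subst has_integral_restrict) auto
  then have "T * d \<le> (\<Sum>i<n. I i)"
  proof (rule has_integral_le[OF _ total])
    fix t :: real assume t: "t \<in> {0..}"
    show "(if t \<in> {0..T} then d else 0) \<le> (\<Sum>i<n. rho i t)"
    proof (cases "t \<in> {0..T}")
      case True
      then obtain i where i: "i < n" "\<bar>p - x i\<bar> \<le> rho i t"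
        using cov p unfolding sc_covers_def by blast
      have "d \<le> rho i t" using d[OF i(1)] i(2) by linarith
      also have "\<dots> \<le> (\<Sum>i<n. rho i t)"
        by (rule member_le_sum) (use i t nonneg in auto)
      finally show ?thesis using True by simp
    next
      case False
      then show ?thesis using t nonneg by (auto intro: sum_nonneg)
    qed
  qed
  also have "\<dots> \<le> (\<Sum>i<n. b i)" by (rule sum_mono) (use I in auto)
  finally show ?thesis .
qed

lemma sr_covers_point_le:
  assumes "sr_covers S x b rho T" "0 \<le> T" "p \<in> {0..1}"
  obtains i where "i \<in> S" "T * \<bar>p - x i\<bar> \<le> b i"
proof -
  have "T \<in> {0..T}" using assms(2) by simp
  then obtain i where i: "i \<in> S" "0 < rho i" "T \<le> b i / rho i" "\<bar>p - x i\<bar> \<le> rho i"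
    using assms(1,3) unfolding sr_covers_def by blast
  have "T * \<bar>p - x i\<bar> \<le> T * rho i" using i(4) assms(2) by (rule mult_left_mono)
  also have "\<dots> \<le> b i" using i(2,3) by (simp add: pos_le_divide_eq)
  finally show thesis by (rule that[OF i(1)])
qed

lemma le_Sup_insert_zero:
  fixes c :: real
  assumes "bdd_above A" "\<And>T. 0 \<le> T \<Longrightarrow> T < c \<Longrightarrow> T \<in> A"
  shows "c \<le> Sup (insert 0 A)"
proof -
  have "\<exists>a\<in>insert 0 A. y < a" if "y < c" for y
  proof (cases "y < 0")
    case False
    then show ?thesis using assms(2)[of "(y + c) / 2"] that by (intro bexI[of _ "(y + c) / 2"]) auto
  qed auto
  then show ?thesis using assms(1) by (subst le_cSup_iff) auto
qed

lemma so_lifetime_le_opt_set_once: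
  assumes "so_feasible n rho tau" "\<And>rho tau. so_feasible n rho tau \<Longrightarrow> so_lifetime n x b rho tau \<le> M"
  shows "so_lifetime n x b rho tau \<le> opt_set_once n x b"
  unfolding opt_set_once_def
proof (rule cSup_upper)
  show "so_lifetime n x b rho tau \<in> {so_lifetime n x b rho tau |rho tau. so_feasible n rho tau}"
    using assms(1) by blast
  show "bdd_above {so_lifetime n x b rho tau |rho tau. so_feasible n rho tau}"
    using assms(2) by (intro bdd_aboveI[of _ M]) blast
qed

lemma sc_lifetime_le_opt_strip_cover:
  assumes "sc_feasible n b rho" "\<And>rho. sc_feasible n b rho \<Longrightarrow> sc_lifetime n x rho \<le> M"
  shows "sc_lifetime n x rho \<le> opt_strip_cover n x b"
  unfolding opt_strip_cover_def
proof (rule cSup_upper)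
  show "sc_lifetime n x rho \<in> {sc_lifetime n x rho |rho. sc_feasible n b rho}"
    using assms(1) by blast
  show "bdd_above {sc_lifetime n x rho |rho. sc_feasible n b rho}"
    using assms(2) by (intro bdd_aboveI[of _ M]) blast
qed

lemma duty_cycle_lifetime_le_sum:
  assumes P: "partition_on {..<n} P"
    and shift: "\<And>S. S \<subseteq> {..<n} \<Longrightarrow> shift_lifetime S x b \<le> sum w S"
  shows "duty_cycle_lifetime P x b \<le> sum w {..<n}"
proof -
  have "duty_cycle_lifetime P x b \<le> (\<Sum>S\<in>P. sum w S)"
    unfolding duty_cycle_lifetime_def
    by (rule sum_mono) (use shift partition_onD1[OF P] in blast)
  also have "\<dots> = sum w {..<n}" using sum.partition[OF finite_lessThan P, of w] by simp
  finally show ?thesis .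
qed

text \<open>The pulse is half-open: a function that is r on a closed interval and 0 right after it
  is not piecewise constant in the sense above. Hence the Strip Cover schedule for the example
  reaches lifetime 8 only as a supremum.\<close>
definition pulse :: "real \<Rightarrow> real \<Rightarrow> real \<Rightarrow> real \<Rightarrow> real" where
  "pulse r a c t = (if a \<le> t \<and> t < c then r else 0)"

lemma piecewise_const_pulse: "piecewise_const (pulse r a c)"
  unfolding piecewise_const_def
proof (intro exI[of _ "{a, c}"] conjI allI impI)
  fix s t assume "0 \<le> s \<and> s \<le> t \<and> (\<forall>u\<in>{a, c}. \<not> (s < u \<and> u \<le> t))"
  then show "pulse r a c s = pulse r a c t" unfolding pulse_def by auto
qed simp

lemma has_integral_pulse:
  assumes "0 \<le> a" "a \<le> c"
  shows "(pulse r a c has_integral (r * (c - a))) {0..}"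
proof -
  have "((\<lambda>t. if t \<in> {a..c} then r else 0) has_integral (r * (c - a))) {0..}"
    using has_integral_const_real[of r a c] assms
    by (subst has_integral_restrict) (auto simp: mult.commute)
  then show ?thesis
    by (rule has_integral_spike[OF negligible_sing[of c], rotated]) (auto simp: pulse_def)
qed

lemma ex_x_simps [simp]:
  "ex_x 0 = 1/4" "ex_x 1 = 3/4" "ex_x 2 = 3/4" "ex_x (Suc 0) = 3/4" "ex_x (Suc (Suc 0)) = 3/4"
  by (simp_all add: ex_x_def)

lemma ex_b_simps [simp]:
  "ex_b 0 = 2" "ex_b 1 = 1" "ex_b 2 = 1" "ex_b (Suc 0) = 1" "ex_b (Suc (Suc 0)) = 1"
  by (simp_all add: ex_b_def)

lemma less_3_cases: "(i::nat) < 3 \<longleftrightarrow> i = 0 \<or> i = 1 \<or> i = 2" by auto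

lemma ex_so_covers_le:
  assumes "so_covers 3 ex_x ex_b rho tau T" "0 \<le> T"
  shows "T \<le> 24"
proof -
  have "\<And>i. i < 3 \<Longrightarrow> 1/4 \<le> \<bar>0 - ex_x i\<bar> \<and> 0 \<le> ex_b i \<and> ex_b i \<le> 2"
    by (auto simp: less_3_cases)
  then show ?thesis
    using so_covers_le[OF assms, where p = 0 and d = "1/4" and B = 2] by auto
qed

lemma ex_so_lifetime_le: "so_lifetime 3 ex_x ex_b rho tau \<le> 24"
  unfolding so_lifetime_def by (rule cSup_least) (auto intro: ex_so_covers_le)

lemma ex_sc_covers_le:
  assumes "sc_feasible 3 ex_b rho" "sc_covers 3 ex_x rho T" "0 \<le> T"
  shows "T \<le> 16"
proof -
  have "\<And>i. i < 3 \<Longrightarrow> 1/4 \<le> \<bar>0 - ex_x i\<bar>"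
    by (auto simp: less_3_cases)
  moreover have "(\<Sum>i<3. ex_b i) = 4"
    by (simp add: numeral_3_eq_3)
  ultimately show ?thesis
    using sc_covers_le[OF assms, where p = 0 and d = "1/4"] by auto
qed

lemma ex_sc_lifetime_le: "sc_feasible 3 ex_b rho \<Longrightarrow> sc_lifetime 3 ex_x rho \<le> 16"
  unfolding sc_lifetime_def by (rule cSup_least) (auto intro: ex_sc_covers_le)

definition ex_shift_weight :: "nat \<Rightarrow> real" where
  "ex_shift_weight i = [8/3, 4/3, 4/3] ! i"

lemma ex_shift_weight_simps [simp]:
  "ex_shift_weight 0 = 8/3" "ex_shift_weight 1 = 4/3" "ex_shift_weight 2 = 4/3"
  "ex_shift_weight (Suc 0) = 4/3" "ex_shift_weight (Suc (Suc 0)) = 4/3"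
  by (simp_all add: ex_shift_weight_def)

lemma ex_sr_covers_le:
  assumes S: "S \<subseteq> {..<3}" and T: "0 \<le> T" and cov: "sr_covers S ex_x ex_b rho T"
  shows "T \<le> sum ex_shift_weight S"
proof -
  have S3: "i = 0 \<or> i = 1 \<or> i = 2" if "i \<in> S" for i using S that by auto
  have fin: "finite S" using S finite_subset by blast
  have nonneg: "0 \<le> ex_shift_weight i" if "i \<in> S" for i using S3[OF that] by auto
  have single_le: "ex_shift_weight i \<le> sum ex_shift_weight S" if "i \<in> S" for i
    by (rule member_le_sum) (use fin that nonneg in auto)
  obtain i where i: "i \<in> S" "T * \<bar>0 - ex_x i\<bar> \<le> ex_b i"
    using sr_covers_point_le[OF cov T, of 0] by auto
  obtain j where j: "j \<in> S" "T * \<bar>1 - ex_x j\<bar> \<le> ex_b j"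
    using sr_covers_point_le[OF cov T, of 1] by auto
  consider "i = 1 \<or> i = 2" | "j = 0" | "i = 0" "j = 1 \<or> j = 2"
    using S3 i(1) j(1) by blast
  then show ?thesis
  proof cases
    case 1
    then have "T \<le> ex_shift_weight i" using i(2) by auto
    then show ?thesis using single_le[OF i(1)] by linarith
  next
    case 2
    then have "T \<le> ex_shift_weight j" using j(2) by auto
    then show ?thesis using single_le[OF j(1)] by linarith
  next
    case 3
    then have "T \<le> sum ex_shift_weight {i, j}" using j(2) by auto
    also have "\<dots> \<le> sum ex_shift_weight S"
      using fin i(1) j(1) nonneg by (intro sum_mono2) auto
    finally show ?thesis .
  qed
qed

lemma ex_shift_lifetime_le:
  assumes "S \<subseteq> {..<3}"
  shows "shift_lifetime S ex_x ex_b \<le> sum ex_shift_weight S"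
  unfolding shift_lifetime_def
proof (rule cSup_least)
  fix T assume "T \<in> insert 0 {T. 0 \<le> T \<and> (\<exists>rho. (\<forall>i\<in>S. 0 \<le> rho i) \<and> sr_covers S ex_x ex_b rho T)}"
  moreover have "0 \<le> ex_shift_weight i" if "i \<in> S" for i
    using that assms by (auto simp: less_3_cases dest!: subsetD)
  then have "0 \<le> sum ex_shift_weight S" by (rule sum_nonneg)
  ultimately show "T \<le> sum ex_shift_weight S" using ex_sr_covers_le[OF assms] by auto
qed simp

lemma ex_duty_cycle_lifetime_le:
  assumes "partition_on {..<3} P"
  shows "duty_cycle_lifetime P ex_x ex_b \<le> 16/3"
  using duty_cycle_lifetime_le_sum[OF assms ex_shift_lifetime_le]
  by (simp add: numeral_3_eq_3)

text \<open>With radius 3/4, sensor 0 alone covers [0, 1] for 8/3 time units.\<close>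
lemma ex_duty_cycle_lifetime_pos: "0 < duty_cycle_lifetime {{..<3}} ex_x ex_b"
proof -
  let ?A = "{T. 0 \<le> T \<and> (\<exists>rho. (\<forall>i\<in>{..<3}. 0 \<le> rho i) \<and> sr_covers {..<3} ex_x ex_b rho T)}"
  have "sr_covers {..<3} ex_x ex_b (\<lambda>_. 3/4) 1"
    unfolding sr_covers_def by (intro ballI bexI[of _ 0]) (auto split: abs_split)
  then have "1 \<in> ?A" by (intro CollectI conjI exI[of _ "\<lambda>_. 3/4"]) auto
  moreover have "bdd_above (insert 0 ?A)"
    using ex_sr_covers_le[of "{..<3}"]
    by (intro bdd_aboveI[of _ "sum ex_shift_weight {..<3}"]) (auto simp: numeral_3_eq_3)
  ultimately have "1 \<le> shift_lifetime {..<3} ex_x ex_b"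
    unfolding shift_lifetime_def by (intro cSup_upper) auto
  then show ?thesis by (simp add: duty_cycle_lifetime_def)
qed

lemma ex_opt_set_once_ge: "8 \<le> opt_set_once 3 ex_x ex_b"
proof -
  define rho :: "nat \<Rightarrow> real" where "rho = (\<lambda>_. 1/4)"
  define tau :: "nat \<Rightarrow> real" where "tau = (\<lambda>i. if i = 2 then 4 else 0)"
  have "so_covers 3 ex_x ex_b rho tau 8"
    unfolding so_covers_def
  proof (intro ballI)
    fix t p :: real assume "t \<in> {0..8}" "p \<in> {0..1}"
    then consider "p \<le> 1/2" | "1/2 \<le> p" "t \<le> 4" | "1/2 \<le> p" "4 \<le> t" by linarith
    then show "\<exists>i<3. 0 < rho i \<and> \<bar>p - ex_x i\<bar> \<le> rho i \<and> tau i \<le> t \<and> t \<le> tau i + ex_b i / rho i"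
    proof cases
      case 1
      then show ?thesis using \<open>t \<in> {0..8}\<close> \<open>p \<in> {0..1}\<close>
        by (intro exI[of _ 0]) (auto simp: rho_def tau_def split: abs_split)
    next
      case 2
      then show ?thesis using \<open>t \<in> {0..8}\<close> \<open>p \<in> {0..1}\<close>
        by (intro exI[of _ 1]) (auto simp: rho_def tau_def split: abs_split)
    next
      case 3
      then show ?thesis using \<open>t \<in> {0..8}\<close> \<open>p \<in> {0..1}\<close>
        by (intro exI[of _ 2]) (auto simp: rho_def tau_def split: abs_split)
    qed
  qed
  then have "8 \<le> so_lifetime 3 ex_x ex_b rho tau"
    unfolding so_lifetime_def
    by (intro cSup_upper bdd_aboveI[of _ 24]) (auto intro: ex_so_covers_le)
  also have "\<dots> \<le> opt_set_once 3 ex_x ex_b"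
    by (rule so_lifetime_le_opt_set_once[OF _ ex_so_lifetime_le])
       (auto simp: so_feasible_def rho_def tau_def)
  finally show ?thesis .
qed

lemma ex_opt_strip_cover_ge: "8 \<le> opt_strip_cover 3 ex_x ex_b"
proof -
  define rho :: "nat \<Rightarrow> real \<Rightarrow> real" where
    "rho = (\<lambda>i. if i = 0 then pulse (1/4) 0 8 else if i = 1 then pulse (1/4) 0 4 else pulse (1/4) 4 8)"
  have feas: "sc_feasible 3 ex_b rho"
    unfolding sc_feasible_def
  proof (intro allI impI conjI)
    fix i :: nat assume "i < 3"
    then show "\<exists>I. (rho i has_integral I) {0..} \<and> I \<le> ex_b i"
      using has_integral_pulse[of 0 8 "1/4"] has_integral_pulse[of 0 4 "1/4"]
        has_integral_pulse[of 4 8 "1/4"]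
      by (auto simp: less_3_cases rho_def)
  qed (auto simp: rho_def piecewise_const_pulse pulse_def)
  have "sc_covers 3 ex_x rho T" if "T < 8" for T
    unfolding sc_covers_def
  proof (intro ballI)
    fix t p :: real assume "t \<in> {0..T}" "p \<in> {0..1}"
    then consider "p \<le> 1/2" | "1/2 \<le> p" "t < 4" | "1/2 \<le> p" "4 \<le> t" by linarith
    then show "\<exists>i<3. \<bar>p - ex_x i\<bar> \<le> rho i t"
    proof cases
      case 1
      then show ?thesis using \<open>t \<in> {0..T}\<close> \<open>p \<in> {0..1}\<close> \<open>T < 8\<close>
        by (intro exI[of _ 0]) (auto simp: rho_def pulse_def split: abs_split)
    next
      case 2
      then show ?thesis using \<open>t \<in> {0..T}\<close> \<open>p \<in> {0..1}\<close>
        by (intro exI[of _ 1]) (auto simp: rho_def pulse_def split: abs_split)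
    next
      case 3
      then show ?thesis using \<open>t \<in> {0..T}\<close> \<open>p \<in> {0..1}\<close> \<open>T < 8\<close>
        by (intro exI[of _ 2]) (auto simp: rho_def pulse_def split: abs_split)
    qed
  qed
  then have "8 \<le> sc_lifetime 3 ex_x rho"
    unfolding sc_lifetime_def
    by (intro le_Sup_insert_zero bdd_aboveI[of _ 16]) (auto intro: ex_sc_covers_le[OF feas])
  also have "\<dots> \<le> opt_strip_cover 3 ex_x ex_b"
    by (rule sc_lifetime_le_opt_strip_cover[OF feas ex_sc_lifetime_le])
  finally show ?thesis .
qed

theorem lemma9:
  "(\<exists>n x b. (\<forall>i<n. 0 \<le> x i \<and> x i \<le> 1 \<and> 0 \<le> b i)
      \<and> (\<exists>P. partition_on {..<n} P \<and> 0 < duty_cycle_lifetime P x b)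
      \<and> (\<forall>P. partition_on {..<n} P \<longrightarrow>
             3/2 * duty_cycle_lifetime P x b \<le> opt_set_once n x b
           \<and> 3/2 * duty_cycle_lifetime P x b \<le> opt_strip_cover n x b))
   \<and> (\<forall>P. partition_on {..<3} P \<longrightarrow>
             3/2 * duty_cycle_lifetime P ex_x ex_b \<le> opt_set_once 3 ex_x ex_b
           \<and> 3/2 * duty_cycle_lifetime P ex_x ex_b \<le> opt_strip_cover 3 ex_x ex_b)"
proof -
  have ratio: "3/2 * duty_cycle_lifetime P ex_x ex_b \<le> opt_set_once 3 ex_x ex_b
      \<and> 3/2 * duty_cycle_lifetime P ex_x ex_b \<le> opt_strip_cover 3 ex_x ex_b"
    if "partition_on {..<3} P" for P
    using ex_duty_cycle_lifetime_le[OF that] ex_opt_set_once_ge ex_opt_strip_cover_ge by auto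
  have "\<forall>i<3. 0 \<le> ex_x i \<and> ex_x i \<le> 1 \<and> 0 \<le> ex_b i"
    by (auto simp: less_3_cases)
  moreover have "partition_on {..<3::nat} {{..<3}}"
    by (rule partition_on_space) (auto simp: lessThan_empty_iff)
  ultimately show ?thesis
    using ex_duty_cycle_lifetime_pos ratio by blast
qed

end
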